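(* Let $A=F+H$ on $\mathbb{R}^d$, where $F:\mathbb{R}^d\to\mathbb{R}^d$ is single-valued maximal monotone with $L$-Lipschitz $(p-1)$-th order derivative ($p\geq1$ integer, $L>0$) and $H$ is maximal monotone. Let $\hat\sigma\in(0,1)$, $0<\sigma_l<\sigma_u<1$ with $\sigma:=\hat\sigma+\sigma_u<1$, and $x_0\in\mathbb{R}^d$. Suppose that for every $k\geq0$: $x_k'=\mathcal{P}_{\mathrm{dom}(A)}(x_k)$; $\lambda_{k+1}>0$, $y_{k+1}\in\mathbb{R}^d$ and $u_{k+1}\in(F_{x_k'}+H)(y_{k+1})$ satisfy $\|\lambda_{k+1}u_{k+1}+y_{k+1}-x_k\|\leq\hat\sigma\|y_{k+1}-x_k\|$ and $\frac{\sigma_lp!}{L}\leq\lambda_{k+1}\|y_{k+1}-x_k\|^{p-1}\leq\frac{\sigma_up!}{L}$; $v_{k+1}=F(y_{k+1})+u_{k+1}-F_{x_k'}(y_{k+1})$; and $x_{k+1}=x_k-\lambda_{k+1}v_{k+1}$. Then, with $\theta=\frac{\sigma_lp!}{L}$ and $\epsilon_{k}=0$ for all $k\geq1$, these iterates satisfy, for every $k\geq0$: $v_{k+1}\in A^{\epsilon_{k+1}}(y_{k+1})$ (indeed $v_{k+1}\in A(y_{k+1})$), $\|\lambda_{k+1}v_{k+1}+y_{k+1}-x_k\|^2+2\lambda_{k+1}\epsilon_{k+1}\leq\sigma^2\|y_{k+1}-x_k\|^2$, and $\lambda_{k+1}\|y_{k+1}-x_k\|^{p-1}\geq\theta$; that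 is, they are iterates of the conceptual framework with these parameters.
   Context: $F$ having $L$-Lipschitz $(p-1)$-th order derivative means $\|D^{(p-1)}F(x')-D^{(p-1)}F(x)\|_{\mathrm{op}}\leq L\|x'-x\|$ for all $x,x'$, with $D^{(0)}F=F$. $F_x(u)=\sum_{j=0}^{p-1}\frac{1}{j!}D^{(j)}F(x)[u-x]^j$ is the $(p-1)$-th order Taylor approximation of $F$ at $x$. $\mathcal{P}_{\mathrm{dom}(A)}$ is the Euclidean projection onto $\mathrm{dom}(A)=\{x:Ax\neq\emptyset\}$. The $\epsilon$-enlargement is $A^{\epsilon}(x)=\{v:\langle x-\tilde x,v-\tilde v\rangle\geq-\epsilon\ \forall\tilde x,\forall\tilde v\in A\tilde x\}$. *)

theory Defs
  imports "HOL-Analysis.Analysis"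
begin

definition monotone_op :: "('a::euclidean_space \<Rightarrow> 'a set) \<Rightarrow> bool" where
  "monotone_op A \<longleftrightarrow>
     (\<forall>x y u v. u \<in> A x \<longrightarrow> v \<in> A y \<longrightarrow> inner (x - y) (u - v) \<ge> 0)"

definition maximal_monotone :: "('a::euclidean_space \<Rightarrow> 'a set) \<Rightarrow> bool" where
  "maximal_monotone A \<longleftrightarrow> monotone_op A \<and>
     (\<forall>x u. (\<forall>y v. v \<in> A y \<longrightarrow> inner (x - y) (u - v) \<ge> 0) \<longrightarrow> u \<in> A x)"

definition op_dom :: "('a \<Rightarrow> 'b set) \<Rightarrow> 'a set" where
  "op_dom A = {x. A x \<noteq> {}}"

definition op_plus :: "('a \<Rightarrow> 'a::ab_group_add) \<Rightarrow> ('a \<Rightarrow> 'a set) \<Rightarrow> 'a \<Rightarrow> 'a set" where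
  "op_plus F H x = (\<lambda>h. F x + h) ` H x"

definition eps_enlargement :: "('a::euclidean_space \<Rightarrow> 'a set) \<Rightarrow> real \<Rightarrow> 'a \<Rightarrow> 'a set" where
  "eps_enlargement A \<epsilon> x =
     {v. \<forall>x' v'. v' \<in> A x' \<longrightarrow> inner (x - x') (v - v') \<ge> - \<epsilon>}"

definition is_projection :: "'a::euclidean_space set \<Rightarrow> 'a \<Rightarrow> 'a \<Rightarrow> bool" where
  "is_projection S x x' \<longleftrightarrow> x' \<in> S \<and> (\<forall>z\<in>S. dist x x' \<le> dist x z)"

text \<open>DF j x is the j-th derivative of F at x,
  a j-linear map, represented as a function of the list of its j arguments
  (the first list element is the most recently differentiated direction).
  The predicate says: DF 0 = F, DF (j+1) x is the Frechet derivative of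
  z \<mapsto> DF j z for j < p - 1, and DF (p-1) is L-Lipschitz in operator norm,
  the operator norm of a multilinear map being its supremum over arguments of norm at most 1.\<close>
definition lipschitz_higher_deriv ::
  "('a::euclidean_space \<Rightarrow> 'a) \<Rightarrow> nat \<Rightarrow> real \<Rightarrow> (nat \<Rightarrow> 'a \<Rightarrow> 'a list \<Rightarrow> 'a) \<Rightarrow> bool" where
  "lipschitz_higher_deriv F p L DF \<longleftrightarrow>
     (\<forall>x. DF 0 x [] = F x) \<and>
     (\<forall>j < p - 1. \<forall>hs x. length hs = j \<longrightarrow>
        ((\<lambda>z. DF j z hs) has_derivative (\<lambda>h. DF (Suc j) x (h # hs))) (at x)) \<and>
     (\<forall>x x' hs. length hs = p - 1 \<and> (\<forall>h\<in>set hs. norm h \<le> 1) \<longrightarrow>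
        norm (DF (p - 1) x' hs - DF (p - 1) x hs) \<le> L * norm (x' - x))"

definition taylor_approx ::
  "(nat \<Rightarrow> 'a::euclidean_space \<Rightarrow> 'a list \<Rightarrow> 'a) \<Rightarrow> nat \<Rightarrow> 'a \<Rightarrow> 'a \<Rightarrow> 'a" where
  "taylor_approx DF p x u = (\<Sum>j<p. (1 / fact j) *\<^sub>R DF j x (replicate j (u - x)))"

end

theory Submission
  imports Defs
begin

text \<open>
  The step bound combines the inexactness condition on u with Taylor's estimate
  |F y - F_x' y| \<le> L/p! |y - x'|^p for a Lipschitz (p-1)-th derivative and with the upper
  step-size condition, which turns lam L/p! |y - x|^p into \<sigma>u |y - x|. The real difficulty is
  |y - x'| \<le> |y - x|, since dom A = dom H need not be convex. It holds because the closure of the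
  domain of a maximal monotone operator is convex: by Minty's theorem every w = z + \<gamma> c with
  c \<in> H z is attained, and for w on a segment between points of dom H the resolvent point z tends
  to w as \<gamma> tends to 0. Minty's theorem follows from its version for finite monotone sets by
  compactness; the finite case minimises the largest of the quadratics (z - a) \<bullet> (z - x + b)
  and uses monotonicity at the minimiser.
\<close>

lemma inner_diff_diff_eq:
  fixes z p q :: "'a::real_inner"
  shows "inner (z - p) (z - q) = (norm (z - midpoint p q))\<^sup>2 - (dist p q / 2)\<^sup>2"
  by (simp add: midpoint_def dist_norm power2_norm_eq_inner power_divide inner_diff_left
      inner_diff_right inner_add_left inner_add_right inner_commute field_simps)

lemma inner_diff_diff_nonpos_iff:
  fixes z p q :: "'a::real_inner"
  shows "inner (z - p) (z - q) \<le> 0 \<longleftrightarrow> z \<in> cball (midpoint p q) (dist p q / 2)"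
proof -
  have "inner (z - p) (z - q) \<le> 0 \<longleftrightarrow> (dist z (midpoint p q))\<^sup>2 \<le> (dist p q / 2)\<^sup>2"
    by (simp add: inner_diff_diff_eq dist_norm)
  also have "\<dots> \<longleftrightarrow> dist z (midpoint p q) \<le> dist p q / 2"
    by (simp add: abs_le_square_iff)
  finally show ?thesis
    by (simp add: dist_commute)
qed

lemma continuous_on_Max_image:
  fixes f :: "'i \<Rightarrow> 'a::topological_space \<Rightarrow> real"
  assumes "finite G" "G \<noteq> {}" "\<And>g. g \<in> G \<Longrightarrow> continuous_on S (f g)"
  shows "continuous_on S (\<lambda>z. Max ((\<lambda>g. f g z) ` G))"
  using assms
proof (induction G rule: finite_ne_induct)
  case (insert g G)
  then have "(\<lambda>z. Max ((\<lambda>g. f g z) ` insert g G)) = (\<lambda>z. max (f g z) (Max ((\<lambda>g. f g z) ` G)))"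
    by auto
  with insert show ?case
    by (auto intro: continuous_on_max)
qed simp

lemma convex_hull_image_weights:
  fixes c :: "'i \<Rightarrow> 'a::real_vector"
  assumes "finite A" "y \<in> convex hull (c ` A)"
  shows "\<exists>\<mu>. (\<forall>g\<in>A. 0 \<le> \<mu> g) \<and> sum \<mu> A = 1 \<and> (\<Sum>g\<in>A. \<mu> g *\<^sub>R c g) = y"
proof -
  let ?Y = "{y. \<exists>\<mu>. (\<forall>g\<in>A. 0 \<le> \<mu> g) \<and> sum \<mu> A = 1 \<and> (\<Sum>g\<in>A. \<mu> g *\<^sub>R c g) = y}"
  have "c g \<in> ?Y" if "g \<in> A" for g
    using that assms(1)
    by (intro CollectI exI[of _ "\<lambda>h. if h = g then 1 else 0"])
      (auto simp: if_distrib[of "\<lambda>r. r *\<^sub>R _"] cong: if_cong)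
  moreover have "convex ?Y"
    unfolding convex_def
  proof (intro ballI allI impI)
    fix y1 y2 and s t :: real
    assume "y1 \<in> ?Y" "y2 \<in> ?Y" and st: "0 \<le> s" "0 \<le> t" "s + t = 1"
    then obtain \<mu>1 \<mu>2
      where \<mu>1: "\<forall>g\<in>A. 0 \<le> \<mu>1 g" "sum \<mu>1 A = 1" "(\<Sum>g\<in>A. \<mu>1 g *\<^sub>R c g) = y1"
        and \<mu>2: "\<forall>g\<in>A. 0 \<le> \<mu>2 g" "sum \<mu>2 A = 1" "(\<Sum>g\<in>A. \<mu>2 g *\<^sub>R c g) = y2"
      by blast
    show "s *\<^sub>R y1 + t *\<^sub>R y2 \<in> ?Y"
      using \<mu>1 \<mu>2 st
      by (intro CollectI exI[of _ "\<lambda>g. s * \<mu>1 g + t * \<mu>2 g"])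
        (simp add: sum.distrib scaleR_add_left flip: sum_distrib_left scaleR_scaleR scaleR_sum_right)
  qed
  ultimately have "convex hull (c ` A) \<subseteq> ?Y"
    by (intro hull_minimal) auto
  with assms(2) show ?thesis
    by blast
qed

lemma norm_diff_towards_closest_point_less:
  fixes C :: "'a::euclidean_space set"
  assumes "convex C" "closed C" "q \<in> C" "\<forall>w\<in>C. dist z q \<le> dist z w" "m \<in> C"
    and "q \<noteq> z" "0 < t" "t \<le> 1"
  shows "norm (z + t *\<^sub>R (q - z) - m) < norm (z - m)"
proof -
  have "inner (z - q) (m - q) \<le> 0"
    using assms(1,2,3,5,4) by (rule any_closest_point_dot)
  then have "2 * t * (norm (z - q))\<^sup>2 \<le> 2 * t * inner (z - q) (z - m)"
    using \<open>0 < t\<close> by (simp add: power2_norm_eq_inner inner_diff_right)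
  moreover have "t\<^sup>2 * (norm (z - q))\<^sup>2 < 2 * t * (norm (z - q))\<^sup>2"
    using assms(6-8) by (simp add: power2_eq_square)
  moreover have "(norm (z + t *\<^sub>R (q - z) - m))\<^sup>2
      = (norm (z - m))\<^sup>2 - 2 * t * inner (z - q) (z - m) + t\<^sup>2 * (norm (z - q))\<^sup>2"
    unfolding power2_norm_eq_inner
    by (simp add: inner_diff_left inner_diff_right inner_add_left inner_add_right inner_commute
        algebra_simps power2_eq_square)
  ultimately have "(norm (z + t *\<^sub>R (q - z) - m))\<^sup>2 < (norm (z - m))\<^sup>2"
    by linarith
  then show ?thesis
    by (rule power_less_imp_less_base) simp
qed

lemma Max_decreases_towards_convex_hull_of_active_centres:
  fixes c :: "'i \<Rightarrow> 'a::euclidean_space" and \<rho> :: "'i \<Rightarrow> real"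
  defines "f g w \<equiv> (norm (w - c g))\<^sup>2 - \<rho> g"
  assumes fin: "finite G" and A: "A = {g\<in>G. \<forall>g'\<in>G. f g' z \<le> f g z}"
    and q: "q \<in> convex hull (c ` A)" and q_min: "\<forall>w\<in>convex hull (c ` A). dist z q \<le> dist z w"
    and "q \<noteq> z"
  shows "\<exists>t. 0 < t \<and> t \<le> 1 \<and> (MAX g\<in>G. f g (z + t *\<^sub>R (q - z))) < (MAX g\<in>G. f g z)"
proof -
  define M where "M = (MAX g\<in>G. f g z)"
  have "A \<noteq> {}"
    using q by auto
  then have "G \<noteq> {}"
    using A by auto
  have A_eq: "A = {g\<in>G. f g z = M}"
    unfolding A M_def using fin \<open>G \<noteq> {}\<close> by (auto intro!: Max_eqI[symmetric])
  \<comment> \<open>the active f g decrease along the whole segment, the inactive ones stay below M near z\<close>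
  have active: "f g (z + t *\<^sub>R (q - z)) < M" if "g \<in> A" "0 < t" "t \<le> 1" for g t
  proof -
    have "norm (z + t *\<^sub>R (q - z) - c g) < norm (z - c g)"
      using that q q_min \<open>q \<noteq> z\<close> fin
      by (intro norm_diff_towards_closest_point_less[of "convex hull (c ` A)"])
        (auto simp: hull_inc A compact_imp_closed compact_convex_hull finite_imp_compact)
    then have "(norm (z + t *\<^sub>R (q - z) - c g))\<^sup>2 < (norm (z - c g))\<^sup>2"
      by (rule power_strict_mono) simp_all
    then show ?thesis
      using that(1) unfolding A_eq f_def by simp
  qed
  have "\<forall>\<^sub>F t in at_right 0. \<forall>g\<in>G - A. f g (z + t *\<^sub>R (q - z)) < M"
  proof (intro eventually_ball_finite ballI)
    fix g assume "g \<in> G - A"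
    then have "f g z < M"
      using fin unfolding A_eq M_def by (simp add: order.not_eq_order_implies_strict)
    moreover have "((\<lambda>t. f g (z + t *\<^sub>R (q - z))) \<longlongrightarrow> f g z) (at_right 0)"
      unfolding f_def by (auto intro!: tendsto_eq_intros)
    ultimately show "\<forall>\<^sub>F t in at_right 0. f g (z + t *\<^sub>R (q - z)) < M"
      by (simp add: order_tendstoD)
  qed (use fin in simp)
  moreover have "\<forall>\<^sub>F t in at_right (0::real). 0 < t \<and> t \<le> 1"
    by (auto simp: eventually_at_right_field intro!: exI[of _ 1])
  ultimately obtain t where t: "0 < t" "t \<le> 1" "\<forall>g\<in>G - A. f g (z + t *\<^sub>R (q - z)) < M"
    using eventually_happens'[OF trivial_limit_at_right_real eventually_conj] by blast
  then have "(MAX g\<in>G. f g (z + t *\<^sub>R (q - z))) < M"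
    using fin \<open>G \<noteq> {}\<close> active by auto
  with t show ?thesis
    unfolding M_def by auto
qed

lemma ex_in_convex_hull_of_active_centres:
  fixes c :: "'i \<Rightarrow> 'a::euclidean_space" and \<rho> :: "'i \<Rightarrow> real"
  assumes fin: "finite G" and ne: "G \<noteq> {}"
  shows "\<exists>z. z \<in> convex hull
               (c ` {g\<in>G. \<forall>g'\<in>G. (norm (z - c g'))\<^sup>2 - \<rho> g' \<le> (norm (z - c g))\<^sup>2 - \<rho> g})"
proof -
  define f where "f g z = (norm (z - c g))\<^sup>2 - \<rho> g" for g z
  define K where "K = convex hull (c ` G)"
  have "continuous_on K (\<lambda>z. MAX g\<in>G. f g z)"
    unfolding f_def by (intro continuous_on_Max_image fin ne continuous_intros)
  moreover have "compact K" "K \<noteq> {}"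
    unfolding K_def using fin ne by (auto simp: compact_convex_hull finite_imp_compact)
  ultimately obtain z where "z \<in> K" and z_min: "\<And>w. w \<in> K \<Longrightarrow> (MAX g\<in>G. f g z) \<le> (MAX g\<in>G. f g w)"
    using continuous_attains_inf by metis
  define A where "A = {g\<in>G. \<forall>g'\<in>G. f g' z \<le> f g z}"
  define C where "C = convex hull (c ` A)"
  have "z \<in> C"
  proof (rule ccontr)
    assume "z \<notin> C"
    define q where "q = closest_point C z"
    have "compact C"
      unfolding C_def A_def using fin by (simp add: compact_convex_hull finite_imp_compact)
    moreover have "C \<noteq> {}"
    proof -
      have "(MAX g\<in>G. f g z) \<in> (\<lambda>g. f g z) ` G"
        using fin ne by simp
      then obtain g where "g \<in> G" "(MAX g\<in>G. f g z) = f g z"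
        by blast
      moreover have "f g' z \<le> (MAX g\<in>G. f g z)" if "g' \<in> G" for g'
        using fin that by simp
      ultimately have "g \<in> A"
        unfolding A_def by simp
      then show ?thesis
        unfolding C_def by auto
    qed
    ultimately have "q \<in> C" "\<forall>w\<in>C. dist z q \<le> dist z w"
      unfolding q_def using closest_point_exists[OF compact_imp_closed] by blast+
    moreover have "q \<noteq> z"
      using \<open>z \<notin> C\<close> \<open>q \<in> C\<close> by auto
    ultimately obtain t where t: "0 < t" "t \<le> 1"
      and descent: "(MAX g\<in>G. f g (z + t *\<^sub>R (q - z))) < (MAX g\<in>G. f g z)"
      using Max_decreases_towards_convex_hull_of_active_centres[OF fin A_def[unfolded f_def]]
      unfolding f_def C_def by blast
    have "C \<subseteq> K"
      unfolding C_def K_def A_def by (intro hull_mono image_mono) auto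
    then have "(1 - t) *\<^sub>R z + t *\<^sub>R q \<in> K"
      using \<open>z \<in> K\<close> \<open>q \<in> C\<close> t convex_convex_hull[of "c ` G"] unfolding K_def convex_def by auto
    then have "z + t *\<^sub>R (q - z) \<in> K"
      by (simp add: algebra_simps)
    with descent show False
      using z_min by (meson not_le)
  qed
  then show ?thesis
    unfolding C_def A_def f_def by blast
qed

lemma sum_sum_inner_diff_eq:
  fixes a b :: "'i \<Rightarrow> 'a::real_inner"
  assumes \<mu>_sum: "sum \<mu> A = 1"
  shows "(\<Sum>i\<in>A. \<mu> i * (\<Sum>j\<in>A. \<mu> j * inner (a i - a j) (b i - b j)))
    = 2 * ((\<Sum>i\<in>A. \<mu> i * inner (a i) (b i)) - inner (\<Sum>i\<in>A. \<mu> i *\<^sub>R a i) (\<Sum>i\<in>A. \<mu> i *\<^sub>R b i))"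
proof -
  define a' where "a' = (\<Sum>i\<in>A. \<mu> i *\<^sub>R a i)"
  define b' where "b' = (\<Sum>i\<in>A. \<mu> i *\<^sub>R b i)"
  define S where "S = (\<Sum>i\<in>A. \<mu> i * inner (a i) (b i))"
  have mean_a: "(\<Sum>i\<in>A. \<mu> i * inner (a i) w) = inner a' w" for w
    by (simp add: a'_def inner_sum_left)
  have mean_b: "(\<Sum>i\<in>A. \<mu> i * inner w (b i)) = inner w b'" for w
    by (simp add: b'_def inner_sum_right)
  have row_sum: "(\<Sum>j\<in>A. \<mu> j * inner (a i - a j) (b i - b j))
      = inner (a i) (b i) - inner (a i) b' - inner a' (b i) + S" for i
  proof -
    have "(\<Sum>j\<in>A. \<mu> j * inner (a i - a j) (b i - b j))
        = (\<Sum>j\<in>A. \<mu> j * inner (a i) (b i) - \<mu> j * inner (a i) (b j) - \<mu> j * inner (a j) (b i)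
            + \<mu> j * inner (a j) (b j))"
      by (rule sum.cong) (simp_all add: inner_diff_left inner_diff_right algebra_simps)
    then show ?thesis
      using \<mu>_sum by (simp add: sum.distrib sum_subtractf mean_a mean_b S_def flip: sum_distrib_right)
  qed
  have "(\<Sum>i\<in>A. \<mu> i * (\<Sum>j\<in>A. \<mu> j * inner (a i - a j) (b i - b j)))
      = (\<Sum>i\<in>A. \<mu> i * inner (a i) (b i) - \<mu> i * inner (a i) b' - \<mu> i * inner a' (b i) + \<mu> i * S)"
    unfolding row_sum by (simp add: algebra_simps)
  also have "\<dots> = 2 * (S - inner a' b')"
    using \<mu>_sum by (simp add: sum.distrib sum_subtractf mean_a mean_b S_def flip: sum_distrib_right)
  finally show ?thesis
    unfolding a'_def b'_def S_def .
qed

lemma monotone_weighted_sum_nonpos: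
  fixes a b :: "'i \<Rightarrow> 'a::real_inner"
  assumes fin: "finite A" and \<mu>_nonneg: "\<forall>i\<in>A. 0 \<le> \<mu> i" and \<mu>_sum: "sum \<mu> A = 1"
    and mono: "\<forall>i\<in>A. \<forall>j\<in>A. 0 \<le> inner (a i - a j) (b i - b j)"
    and z: "z = (\<Sum>i\<in>A. \<mu> i *\<^sub>R midpoint (a i) (x - b i))"
  shows "(\<Sum>i\<in>A. \<mu> i * inner (z - a i) (z - (x - b i))) \<le> 0"
proof -
  define a' where "a' = (\<Sum>i\<in>A. \<mu> i *\<^sub>R a i)"
  define b' where "b' = (\<Sum>i\<in>A. \<mu> i *\<^sub>R b i)"
  define S where "S = (\<Sum>i\<in>A. \<mu> i * inner (a i) (b i))"
  have "z = (1/2) *\<^sub>R (\<Sum>i\<in>A. \<mu> i *\<^sub>R a i + \<mu> i *\<^sub>R x - \<mu> i *\<^sub>R b i)"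
    unfolding z midpoint_def by (simp add: scaleR_sum_right algebra_simps)
  also have "\<dots> = midpoint a' (x - b')"
    using \<mu>_sum
    by (simp add: a'_def b'_def midpoint_def sum.distrib sum_subtractf flip: scaleR_sum_left)
  finally have "midpoint a' (x - b') = z" ..
  then have z_a': "z - (x - b') = - (z - a')"
    by (simp add: midpoint_eq_iff algebra_simps)
  \<comment> \<open>a', b' are the means and S - inner a' b' the covariance of a and b under \<mu>\<close>
  have "(\<Sum>i\<in>A. \<mu> i * inner (z - a i) (z - (x - b i)))
      = inner (z - a') (z - (x - b')) + inner a' b' - S"
    using \<mu>_sum
    by (simp add: a'_def b'_def S_def inner_diff_left inner_diff_right inner_sum_left inner_sum_right
        algebra_simps sum.distrib sum_subtractf sum_distrib_left flip: sum_distrib_right)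
  also have "\<dots> = - (norm (z - a'))\<^sup>2 - (S - inner a' b')"
    unfolding z_a' inner_minus_right power2_norm_eq_inner by simp
  finally have sum_eq: "(\<Sum>i\<in>A. \<mu> i * inner (z - a i) (z - (x - b i))) = \<dots>" .
  have "0 \<le> (\<Sum>i\<in>A. \<mu> i * (\<Sum>j\<in>A. \<mu> j * inner (a i - a j) (b i - b j)))"
    using \<mu>_nonneg mono by (intro sum_nonneg mult_nonneg_nonneg) auto
  then have "inner a' b' \<le> S"
    unfolding sum_sum_inner_diff_eq[OF \<mu>_sum] a'_def b'_def S_def by simp
  then show ?thesis
    unfolding sum_eq using zero_le_power2[of "norm (z - a')"] by linarith
qed

definition monotone_set :: "('a::real_inner \<times> 'a) set \<Rightarrow> bool" where
  "monotone_set G \<longleftrightarrow> (\<forall>a b a' b'. (a, b) \<in> G \<longrightarrow> (a', b') \<in> G \<longrightarrow> 0 \<le> inner (a - a') (b - b'))"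

lemma monotone_setD: "monotone_set G \<Longrightarrow> (a, b) \<in> G \<Longrightarrow> (a', b') \<in> G \<Longrightarrow> 0 \<le> inner (a - a') (b - b')"
  unfolding monotone_set_def by blast

lemma monotone_set_subset: "monotone_set G \<Longrightarrow> S \<subseteq> G \<Longrightarrow> monotone_set S"
  unfolding monotone_set_def by blast

lemma finite_monotone_minty:
  fixes G :: "('a::euclidean_space \<times> 'a) set"
  assumes fin: "finite G" and mono: "monotone_set G"
  shows "\<exists>z. \<forall>a b. (a, b) \<in> G \<longrightarrow> inner (z - a) (z - (x - b)) \<le> 0"
proof (cases "G = {}")
  case False
  define c where "c g = midpoint (fst g) (x - snd g)" for g
  define \<rho> where "\<rho> g = (dist (fst g) (x - snd g) / 2)\<^sup>2" for g
  define f where "f g z = inner (z - fst g) (z - (x - snd g))" for g z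
  have f_eq: "f g z = (norm (z - c g))\<^sup>2 - \<rho> g" for g z
    by (simp add: f_def c_def \<rho>_def inner_diff_diff_eq)
  obtain z where "z \<in> convex hull (c ` {g\<in>G. \<forall>g'\<in>G. f g' z \<le> f g z})"
    unfolding f_eq using ex_in_convex_hull_of_active_centres[OF fin False] by blast
  moreover define A where "A = {g\<in>G. \<forall>g'\<in>G. f g' z \<le> f g z}"
  moreover have "finite A"
    unfolding A_def using fin by simp
  ultimately obtain \<mu> where \<mu>: "\<forall>g\<in>A. 0 \<le> \<mu> g" "sum \<mu> A = 1" "(\<Sum>g\<in>A. \<mu> g *\<^sub>R c g) = z"
    using convex_hull_image_weights by blast
  then obtain g1 where g1: "g1 \<in> A"
    by (metis all_not_in_conv sum.empty zero_neq_one)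
  have "monotone_set A"
    using mono by (rule monotone_set_subset) (auto simp: A_def)
  then have "\<forall>g\<in>A. \<forall>g'\<in>A. 0 \<le> inner (fst g - fst g') (snd g - snd g')"
    using monotone_setD[of A "fst g" "snd g" "fst g'" "snd g'" for g g'] by simp
  then have "(\<Sum>g\<in>A. \<mu> g * f g z) \<le> 0"
    unfolding f_def using \<mu> \<open>finite A\<close>
    by (intro monotone_weighted_sum_nonpos) (auto simp: c_def)
  \<comment> \<open>all active f g share the maximal value f g1 z\<close>
  moreover have "(\<Sum>g\<in>A. \<mu> g * f g z) = (\<Sum>g\<in>A. \<mu> g * f g1 z)"
    using g1 by (intro sum.cong) (auto simp: A_def intro: antisym)
  moreover have "\<dots> = f g1 z"
    using \<mu>(2) by (simp flip: sum_distrib_right)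
  ultimately have "\<forall>g\<in>G. f g z \<le> 0"
    using g1 unfolding A_def by force
  then have "inner (z - a) (z - (x - b)) \<le> 0" if "(a, b) \<in> G" for a b
    using that unfolding f_def by fastforce
  then show ?thesis
    by blast
qed simp

lemma monotone_minty:
  fixes G :: "('a::euclidean_space \<times> 'a) set"
  assumes mono: "monotone_set G"
  shows "\<exists>z. \<forall>a b. (a, b) \<in> G \<longrightarrow> inner (z - a) (z - (x - b)) \<le> 0"
proof (cases "G = {}")
  case False
  then obtain g0 where g0: "g0 \<in> G"
    by blast
  define B where "B g = cball (midpoint (fst g) (x - snd g)) (dist (fst g) (x - snd g) / 2)" for g
  have B_iff: "z \<in> B (a, b) \<longleftrightarrow> inner (z - a) (z - (x - b)) \<le> 0" for z a b
    unfolding B_def inner_diff_diff_nonpos_iff by simp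
  have "B g0 \<inter> (\<Inter>g\<in>G. B g) \<noteq> {}"
  proof (rule compact_imp_fip_image)
    fix I assume "finite I" "I \<subseteq> G"
    moreover from this have "monotone_set (insert g0 I)"
      using g0 by (intro monotone_set_subset[OF mono]) auto
    ultimately obtain z where z: "\<forall>a b. (a, b) \<in> insert g0 I \<longrightarrow> inner (z - a) (z - (x - b)) \<le> 0"
      using finite_monotone_minty[of "insert g0 I"] by blast
    have "z \<in> B g" if "g \<in> insert g0 I" for g
      using that z[rule_format, of "fst g" "snd g"] B_iff[of z "fst g" "snd g"] by simp
    then show "B g0 \<inter> (\<Inter>g\<in>I. B g) \<noteq> {}"
      by blast
  qed (simp_all add: B_def)
  then obtain z where "\<forall>g\<in>G. z \<in> B g"
    by blast
  then show ?thesis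
    using B_iff by blast
qed simp

lemma maximal_monotone_imp_monotone_op: "maximal_monotone A \<Longrightarrow> monotone_op A"
  unfolding maximal_monotone_def by blast

theorem maximal_monotone_resolvent_exists:
  fixes H :: "'a::euclidean_space \<Rightarrow> 'a set"
  assumes H: "maximal_monotone H" and \<gamma>: "0 < \<gamma>"
  shows "\<exists>z b. b \<in> H z \<and> x = z + \<gamma> *\<^sub>R b"
proof -
  define G where "G = {(a, \<gamma> *\<^sub>R b) | a b. b \<in> H a}"
  have "monotone_set G"
    unfolding monotone_set_def
  proof (intro allI impI)
    fix a c a' c' assume "(a, c) \<in> G" "(a', c') \<in> G"
    then obtain b b' where "b \<in> H a" "b' \<in> H a'" "c = \<gamma> *\<^sub>R b" "c' = \<gamma> *\<^sub>R b'"
      unfolding G_def by blast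
    moreover have "monotone_op H"
      using H by (rule maximal_monotone_imp_monotone_op)
    ultimately show "0 \<le> inner (a - a') (c - c')"
      using \<gamma> unfolding monotone_op_def by (simp flip: scaleR_diff_right)
  qed
  then obtain z where z_G: "\<forall>a b. (a, b) \<in> G \<longrightarrow> inner (z - a) (z - (x - b)) \<le> 0"
    using monotone_minty by blast
  have z: "inner (z - a) (z - (x - \<gamma> *\<^sub>R b)) \<le> 0" if "b \<in> H a" for a b
  proof -
    have "(a, \<gamma> *\<^sub>R b) \<in> G"
      unfolding G_def using that by blast
    then show ?thesis
      using z_G by blast
  qed
  have "inner (z - a) ((1 / \<gamma>) *\<^sub>R (x - z) - b) \<ge> 0" if "b \<in> H a" for a b
  proof -
    have "(1 / \<gamma>) *\<^sub>R (x - z) - b = - (1 / \<gamma>) *\<^sub>R (z - (x - \<gamma> *\<^sub>R b))"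
      using \<gamma> by (simp add: algebra_simps)
    then show ?thesis
      using z[OF that] \<gamma> by (simp add: divide_nonpos_pos)
  qed
  then have "(1 / \<gamma>) *\<^sub>R (x - z) \<in> H z"
    using H unfolding maximal_monotone_def by blast
  moreover have "x = z + \<gamma> *\<^sub>R ((1 / \<gamma>) *\<^sub>R (x - z))"
    using \<gamma> by simp
  ultimately show ?thesis
    by blast
qed

lemma monotone_resolvent_segment_bound:
  fixes H :: "'a::euclidean_space \<Rightarrow> 'a set"
  assumes mon: "monotone_op H" and ba: "ba \<in> H a" and bb: "bb \<in> H b" and c: "c \<in> H z"
    and w: "w = z + \<gamma> *\<^sub>R c" "w \<in> closed_segment a b" and \<gamma>: "0 \<le> \<gamma>"
  shows "(dist z w)\<^sup>2 \<le> \<gamma> * (norm ba + norm bb) * (dist z w + dist a b)"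
proof -
  define s where "s = dist z w"
  define K where "K = dist a b"
  obtain t where t: "0 \<le> t" "t \<le> 1" "w = (1 - t) *\<^sub>R a + t *\<^sub>R b"
    using w(2) by (auto simp: in_segment)
  have endpoint: "- (\<gamma> * (s + K) * norm be) \<le> inner (z - e) (w - z)"
    if "be \<in> H e" "dist w e \<le> K" for e be
  proof -
    have "0 \<le> inner (z - e) (c - be)"
      using mon c that(1) unfolding monotone_op_def by blast
    then have "0 \<le> \<gamma> * inner (z - e) (c - be)"
      using \<gamma> by simp
    then have resolvent: "\<gamma> * inner (z - e) be \<le> inner (z - e) (w - z)"
      using w(1) by (simp add: inner_diff_right algebra_simps)
    have "norm (z - e) \<le> s + K"
      using dist_triangle[of z e w] that(2) by (simp add: s_def dist_norm dist_commute)
    then have "norm (z - e) * norm be \<le> (s + K) * norm be"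
      by (rule mult_right_mono) simp
    then have "- ((s + K) * norm be) \<le> inner (z - e) be"
      using Cauchy_Schwarz_ineq2[of "z - e" be] by linarith
    then have "\<gamma> * - ((s + K) * norm be) \<le> \<gamma> * inner (z - e) be"
      using \<gamma> by (rule mult_left_mono)
    with resolvent show ?thesis
      by (simp add: mult.assoc)
  qed
  have "- (\<gamma> * (s + K) * norm ba) - \<gamma> * (s + K) * norm bb
      \<le> (1 - t) * - (\<gamma> * (s + K) * norm ba) + t * - (\<gamma> * (s + K) * norm bb)"
    using t \<gamma> mult_left_le_one_le[of "\<gamma> * (s + K) * norm ba" "1 - t"]
      mult_left_le_one_le[of "\<gamma> * (s + K) * norm bb" t]
    by (simp add: s_def K_def)
  also have "\<dots> \<le> (1 - t) * inner (z - a) (w - z) + t * inner (z - b) (w - z)"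
    using endpoint[OF ba] endpoint[OF bb] dist_in_closed_segment[OF w(2)] t
    by (intro add_mono mult_left_mono) (auto simp: K_def dist_commute)
  also have "\<dots> = - s\<^sup>2"
    by (simp add: s_def t(3) dist_norm power2_norm_eq_inner inner_diff_left inner_diff_right
        algebra_simps)
  finally show ?thesis
    by (simp add: s_def K_def algebra_simps)
qed

lemma less_of_power2_le_linear:
  fixes s a K \<epsilon> :: real
  assumes "s\<^sup>2 \<le> a * (s + K)" and "0 \<le> a" "0 \<le> K" "0 < \<epsilon>" and "a * (\<epsilon> + K) < \<epsilon>\<^sup>2"
  shows "s < \<epsilon>"
proof (rule ccontr)
  assume "\<not> s < \<epsilon>"
  then have "\<epsilon> \<le> s"
    by simp
  have "\<epsilon> * s\<^sup>2 \<le> \<epsilon> * (a * (s + K))"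
    using assms(1,4) by simp
  also have "\<dots> \<le> a * (\<epsilon> + K) * s"
    using mult_left_mono[OF mult_right_mono[OF \<open>\<epsilon> \<le> s\<close> \<open>0 \<le> K\<close>] \<open>0 \<le> a\<close>]
    by (simp add: algebra_simps)
  also have "\<dots> < \<epsilon>\<^sup>2 * s"
    using assms(4,5) \<open>\<epsilon> \<le> s\<close> by simp
  also have "\<dots> \<le> \<epsilon> * s\<^sup>2"
    using assms(4) \<open>\<epsilon> \<le> s\<close> by (simp add: power2_eq_square mult_right_mono)
  finally show False
    by simp
qed

lemma closed_segment_subset_closure_op_dom:
  fixes H :: "'a::euclidean_space \<Rightarrow> 'a set"
  assumes H: "maximal_monotone H" and a: "a \<in> op_dom H" and b: "b \<in> op_dom H"
  shows "closed_segment a b \<subseteq> closure (op_dom H)"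
proof
  fix w assume w: "w \<in> closed_segment a b"
  obtain ba bb where ba: "ba \<in> H a" and bb: "bb \<in> H b"
    using a b unfolding op_dom_def by blast
  define B where "B = norm ba + norm bb"
  define K where "K = dist a b"
  have "0 \<le> B" "0 \<le> K"
    by (simp_all add: B_def K_def)
  \<comment> \<open>the resolvent of \<gamma> H at w lies in op_dom H and tends to w as \<gamma> tends to 0\<close>
  have "\<exists>z\<in>op_dom H. dist z w < \<epsilon>" if \<epsilon>: "0 < \<epsilon>" for \<epsilon>
  proof -
    define \<gamma> where "\<gamma> = \<epsilon>\<^sup>2 / ((B + 1) * (\<epsilon> + K))"
    have "0 < \<gamma>"
      using \<open>0 \<le> B\<close> \<open>0 \<le> K\<close> \<epsilon> by (simp add: \<gamma>_def)
    then obtain z c where c: "c \<in> H z" and wz: "w = z + \<gamma> *\<^sub>R c"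
      using maximal_monotone_resolvent_exists[OF H] by blast
    have "\<gamma> * B * (\<epsilon> + K) = \<epsilon>\<^sup>2 * (B / (B + 1))"
      using \<open>0 \<le> B\<close> \<open>0 \<le> K\<close> \<epsilon> by (simp add: \<gamma>_def)
    also have "\<dots> < \<epsilon>\<^sup>2"
      using \<open>0 \<le> B\<close> \<epsilon> by (simp add: pos_divide_less_eq add_nonneg_pos)
    finally have small: "\<gamma> * B * (\<epsilon> + K) < \<epsilon>\<^sup>2" .
    have "(dist z w)\<^sup>2 \<le> \<gamma> * B * (dist z w + K)"
      unfolding B_def K_def
      using monotone_resolvent_segment_bound[OF maximal_monotone_imp_monotone_op[OF H] ba bb c wz w]
        \<open>0 < \<gamma>\<close> by simp
    then have "dist z w < \<epsilon>"
      using \<open>0 < \<gamma>\<close> \<open>0 \<le> B\<close>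
      by (intro less_of_power2_le_linear[OF _ _ \<open>0 \<le> K\<close> \<epsilon> small]) simp_all
    moreover have "z \<in> op_dom H"
      using c unfolding op_dom_def by blast
    ultimately show ?thesis
      by blast
  qed
  then show "w \<in> closure (op_dom H)"
    unfolding closure_approachable by blast
qed

lemma inner_projection_op_dom_nonpos:
  fixes H :: "'a::euclidean_space \<Rightarrow> 'a set"
  assumes H: "maximal_monotone H" and proj: "is_projection (op_dom H) x x'" and y: "y \<in> op_dom H"
  shows "inner (x - x') (y - x') \<le> 0"
proof -
  have "closed {w. dist x x' \<le> dist x w}"
    by (intro closed_Collect_le continuous_on_const continuous_on_dist continuous_on_id)
  moreover have "op_dom H \<subseteq> {w. dist x x' \<le> dist x w}"
    using proj unfolding is_projection_def by blast
  ultimately have "closure (op_dom H) \<subseteq> {w. dist x x' \<le> dist x w}"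
    by (rule closure_minimal[rotated])
  moreover have "closed_segment x' y \<subseteq> closure (op_dom H)"
    using closed_segment_subset_closure_op_dom[OF H] proj y unfolding is_projection_def by blast
  ultimately have "\<forall>w\<in>closed_segment x' y. dist x x' \<le> dist x w"
    by blast
  then show ?thesis
    by (rule any_closest_point_dot[OF convex_closed_segment closed_segment
          ends_in_segment(1) ends_in_segment(2)])
qed

lemma dist_projection_op_dom_le:
  fixes H :: "'a::euclidean_space \<Rightarrow> 'a set"
  assumes H: "maximal_monotone H" and proj: "is_projection (op_dom H) x x'" and y: "y \<in> op_dom H"
  shows "dist y x' \<le> dist y x"
proof -
  have "(dist y x)\<^sup>2 = (dist y x')\<^sup>2 + (dist x' x)\<^sup>2 - 2 * inner (x - x') (y - x')"
    unfolding dist_norm power2_norm_eq_inner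
    by (simp add: inner_diff_left inner_diff_right inner_commute)
  then have "(dist y x')\<^sup>2 \<le> (dist y x)\<^sup>2"
    using inner_projection_op_dom_nonpos[OF assms] zero_le_power2[of "dist x' x"] by linarith
  then show ?thesis
    by (rule power2_le_imp_le) simp
qed

lemma DERIV_monomial_fact:
  "((\<lambda>s. c * s ^ Suc j / fact (Suc j)) has_real_derivative c * s ^ j / fact j) (at s)"
proof -
  have "((\<lambda>s. c * s ^ Suc j / fact (Suc j)) has_real_derivative c * (real (Suc j) * s ^ j) / fact (Suc j)) (at s)"
    by (intro DERIV_cdivide DERIV_cmult) (use DERIV_pow[of "Suc j" s UNIV] in simp)
  then show ?thesis
    by (simp add: fact_Suc del: of_nat_Suc)
qed

lemma abs_le_power_of_DERIV_bound:
  fixes R Q :: "real \<Rightarrow> real"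
  assumes R': "\<And>s. (R has_real_derivative Q s) (at s)" and R0: "R 0 = 0"
    and Q: "\<And>s. 0 \<le> s \<Longrightarrow> \<bar>Q s\<bar> \<le> M * s ^ k / fact k" and t: "0 \<le> t"
  shows "\<bar>R t\<bar> \<le> M * t ^ Suc k / fact (Suc k)"
proof -
  have "\<sigma> * R t \<le> M * t ^ Suc k / fact (Suc k)" if \<sigma>: "\<bar>\<sigma>\<bar> = 1" for \<sigma>
  proof -
    have "M * 0 ^ Suc k / fact (Suc k) - \<sigma> * R 0 \<le> M * t ^ Suc k / fact (Suc k) - \<sigma> * R t"
    proof (rule DERIV_nonneg_imp_nondecreasing[OF t])
      fix s assume "0 \<le> s" "s \<le> t"
      then have "0 \<le> M * s ^ k / fact k - \<sigma> * Q s"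
        using Q[of s] \<sigma> by (auto simp: abs_if split: if_splits)
      with DERIV_diff[OF DERIV_monomial_fact DERIV_cmult[OF R']]
      show "\<exists>y. ((\<lambda>s. M * s ^ Suc k / fact (Suc k) - \<sigma> * R s) has_real_derivative y) (at s) \<and> 0 \<le> y"
        by blast
    qed
    then show ?thesis
      using R0 by simp
  qed
  from this[of 1] this[of "-1"] show ?thesis
    by linarith
qed

lemma taylor_remainder_bound_Lipschitz:
  fixes f :: "nat \<Rightarrow> real \<Rightarrow> real"
  assumes "\<And>i s. i < n \<Longrightarrow> (f i has_real_derivative f (Suc i) s) (at s)"
    and "\<And>s. 0 \<le> s \<Longrightarrow> \<bar>f n s - f n 0\<bar> \<le> M * s" and "0 \<le> t"
  shows "\<bar>f 0 t - (\<Sum>j\<le>n. f j 0 * t ^ j / fact j)\<bar> \<le> M * t ^ Suc n / fact (Suc n)"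
  using assms
proof (induction n arbitrary: f t)
  case 0
  then show ?case
    by simp
next
  case (Suc n)
  define R where "R s = f 0 s - (\<Sum>j\<le>Suc n. f j 0 * s ^ j / fact j)" for s
  have R_eq: "R = (\<lambda>s. f 0 s - f 0 0 - (\<Sum>j\<le>n. f (Suc j) 0 * s ^ Suc j / fact (Suc j)))"
    by (simp add: R_def fun_eq_iff sum.atMost_Suc_shift del: sum.atMost_Suc)
  have "(R has_real_derivative f (Suc 0) s - (\<Sum>j\<le>n. f (Suc j) 0 * s ^ j / fact j)) (at s)" for s
  proof -
    have "(R has_real_derivative f (Suc 0) s - 0 - (\<Sum>j\<le>n. f (Suc j) 0 * s ^ j / fact j)) (at s)"
      unfolding R_eq by (intro DERIV_diff DERIV_const DERIV_sum DERIV_monomial_fact Suc.prems(1)) simp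
    then show ?thesis
      by simp
  qed
  moreover have "R 0 = 0"
    by (simp add: R_eq)
  moreover have "\<bar>f (Suc 0) s - (\<Sum>j\<le>n. f (Suc j) 0 * s ^ j / fact j)\<bar> \<le> M * s ^ Suc n / fact (Suc n)"
    if "0 \<le> s" for s
    using Suc.IH[of "\<lambda>i. f (Suc i)" s] Suc.prems(1,2) that by simp
  ultimately have "\<bar>R t\<bar> \<le> M * t ^ Suc (Suc n) / fact (Suc (Suc n))"
    by (rule abs_le_power_of_DERIV_bound[OF _ _ _ Suc.prems(3)])
  then show ?case
    unfolding R_def .
qed

lemma lipschitz_higher_deriv_has_derivative:
  assumes "lipschitz_higher_deriv F p L DF" and "j < p - 1" and "length hs = j"
  shows "((\<lambda>z. DF j z hs) has_derivative (\<lambda>h. DF (Suc j) x (h # hs))) (at x)"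
  using assms unfolding lipschitz_higher_deriv_def by blast

lemma higher_deriv_replicate_scaleR:
  assumes FD: "lipschitz_higher_deriv F p L DF" and "j < p"
  shows "DF j z (replicate j (s *\<^sub>R h)) = s ^ j *\<^sub>R DF j z (replicate j h)"
  using \<open>j < p\<close>
proof (induction j arbitrary: z)
  case (Suc j)
  have D: "((\<lambda>z. DF j z (replicate j k)) has_derivative (\<lambda>h. DF (Suc j) z (h # replicate j k))) (at z)"
    for k z
    using Suc.prems by (intro lipschitz_higher_deriv_has_derivative[OF FD]) auto
  \<comment> \<open>both sides of the induction hypothesis have the same derivative in z\<close>
  have "(\<lambda>z. DF j z (replicate j (s *\<^sub>R h))) = (\<lambda>z. s ^ j *\<^sub>R DF j z (replicate j h))"
    using Suc by auto
  then have "(\<lambda>k. DF (Suc j) z (k # replicate j (s *\<^sub>R h))) = (\<lambda>k. s ^ j *\<^sub>R DF (Suc j) z (k # replicate j h))"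
    using D[of "s *\<^sub>R h" z] has_derivative_scaleR_right[OF D[of h z], of "s ^ j"]
    by (metis has_derivative_unique)
  moreover have "DF (Suc j) z ((s *\<^sub>R h) # replicate j h) = s *\<^sub>R DF (Suc j) z (h # replicate j h)"
    using linear_cmul[OF has_derivative_linear[OF D[of h z]]] by blast
  ultimately show ?case
    by (simp add: fun_eq_iff)
qed simp

lemma higher_deriv_replicate_lipschitz:
  assumes FD: "lipschitz_higher_deriv F p L DF" and p: "1 \<le> p"
  shows "norm (DF (p - 1) x' (replicate (p - 1) e) - DF (p - 1) x (replicate (p - 1) e))
           \<le> L * norm (x' - x) * norm e ^ (p - 1)"
proof -
  \<comment> \<open>when e = 0, u = 0 as well, since 1 / 0 = 0 in HOL\<close>
  define u where "u = (1 / norm e) *\<^sub>R e"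
  have "norm u \<le> 1" "e = norm e *\<^sub>R u"
    by (auto simp: u_def)
  have hom: "DF (p - 1) z (replicate (p - 1) e) = norm e ^ (p - 1) *\<^sub>R DF (p - 1) z (replicate (p - 1) u)"
    for z
    using higher_deriv_replicate_scaleR[OF FD, of "p - 1" z "norm e" u] \<open>e = norm e *\<^sub>R u\<close> p by simp
  have "norm (DF (p - 1) x' (replicate (p - 1) u) - DF (p - 1) x (replicate (p - 1) u))
      \<le> L * norm (x' - x)"
    using FD \<open>norm u \<le> 1\<close> unfolding lipschitz_higher_deriv_def by simp
  then have "norm e ^ (p - 1) * norm (DF (p - 1) x' (replicate (p - 1) u) - DF (p - 1) x (replicate (p - 1) u))
      \<le> norm e ^ (p - 1) * (L * norm (x' - x))"
    by (rule mult_left_mono) simp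
  then show ?thesis
    unfolding hom by (simp flip: scaleR_diff_right add: mult_ac)
qed

lemma has_real_derivative_higher_deriv_along_line:
  assumes FD: "lipschitz_higher_deriv F p L DF" and "i < p - 1"
  shows "((\<lambda>t. inner c (DF i (x + t *\<^sub>R e) (replicate i e)))
          has_real_derivative inner c (DF (Suc i) (x + t *\<^sub>R e) (replicate (Suc i) e))) (at t)"
proof -
  have D: "((\<lambda>z. DF i z (replicate i e)) has_derivative (\<lambda>h. DF (Suc i) (x + t *\<^sub>R e) (h # replicate i e)))
      (at (x + t *\<^sub>R e))"
    using assms by (intro lipschitz_higher_deriv_has_derivative) auto
  have "((\<lambda>t. x + t *\<^sub>R e) has_derivative (\<lambda>s. s *\<^sub>R e)) (at t)"
    by (auto intro!: derivative_eq_intros)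
  from has_derivative_compose[OF this D]
  have "((\<lambda>t. inner c (DF i (x + t *\<^sub>R e) (replicate i e)))
      has_derivative (\<lambda>s. inner c (DF (Suc i) (x + t *\<^sub>R e) ((s *\<^sub>R e) # replicate i e)))) (at t)"
    by (rule bounded_linear.has_derivative[OF bounded_linear_inner_right])
  moreover have "DF (Suc i) (x + t *\<^sub>R e) ((s *\<^sub>R e) # replicate i e)
      = s *\<^sub>R DF (Suc i) (x + t *\<^sub>R e) (e # replicate i e)" for s
    using linear_cmul[OF has_derivative_linear[OF D]] by blast
  ultimately show ?thesis
    by (intro has_derivative_imp_has_field_derivative) simp_all
qed

lemma inner_taylor_approx_error:
  fixes F :: "'a::euclidean_space \<Rightarrow> 'a"
  assumes FD: "lipschitz_higher_deriv F p L DF" and p: "1 \<le> p"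
  shows "\<bar>inner c (F y - taylor_approx DF p x y)\<bar> \<le> norm c * L * norm (y - x) ^ p / fact p"
proof -
  define n where "n = p - 1"
  have p_eq: "p = Suc n"
    using p by (simp add: n_def)
  define e where "e = y - x"
  define f where "f i t = inner c (DF i (x + t *\<^sub>R e) (replicate i e))" for i t
  define M where "M = norm c * L * norm e ^ p"
  have "\<bar>f n t - f n 0\<bar> \<le> M * t" if "0 \<le> t" for t
  proof -
    have "\<bar>f n t - f n 0\<bar> \<le> norm c * norm (DF n (x + t *\<^sub>R e) (replicate n e) - DF n x (replicate n e))"
      unfolding f_def by (simp flip: inner_diff_right add: Cauchy_Schwarz_ineq2)
    also have "\<dots> \<le> norm c * (L * norm (t *\<^sub>R e) * norm e ^ n)"
      using higher_deriv_replicate_lipschitz[OF FD p, where x' = "x + t *\<^sub>R e" and x = x and e = e] that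
      by (intro mult_left_mono) (auto simp: n_def)
    also have "\<dots> = M * t"
      using that by (simp add: M_def p_eq algebra_simps)
    finally show ?thesis .
  qed
  then have "\<bar>f 0 1 - (\<Sum>j\<le>n. f j 0 * 1 ^ j / fact j)\<bar> \<le> M * 1 ^ Suc n / fact (Suc n)"
    using has_real_derivative_higher_deriv_along_line[OF FD] unfolding f_def n_def
    by (intro taylor_remainder_bound_Lipschitz) auto
  moreover have "f 0 1 = inner c (F y)"
    using FD unfolding f_def e_def lipschitz_higher_deriv_def by simp
  moreover have "(\<Sum>j\<le>n. f j 0 * 1 ^ j / fact j) = inner c (taylor_approx DF p x y)"
    unfolding f_def taylor_approx_def e_def p_eq inner_sum_right lessThan_Suc_atMost by simp
  ultimately show ?thesis
    by (simp add: M_def e_def p_eq inner_diff_right)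
qed

theorem taylor_approx_error:
  fixes F :: "'a::euclidean_space \<Rightarrow> 'a"
  assumes FD: "lipschitz_higher_deriv F p L DF" and p: "1 \<le> p" and L: "0 \<le> L"
  shows "norm (F y - taylor_approx DF p x y) \<le> L / fact p * norm (y - x) ^ p"
proof (cases "F y = taylor_approx DF p x y")
  case False
  define c where "c = F y - taylor_approx DF p x y"
  have "norm c * norm c \<le> norm c * (L / fact p * norm (y - x) ^ p)"
    using inner_taylor_approx_error[OF FD p, of c y x]
    by (simp add: c_def power2_norm_eq_inner[symmetric] power2_eq_square)
  moreover have "0 < norm c"
    using False by (simp add: c_def)
  ultimately show ?thesis
    unfolding c_def using mult_le_cancel_left_pos by blast
qed (use L in simp)

lemma op_dom_op_plus: "op_dom (op_plus F H) = op_dom H"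
  unfolding op_dom_def op_plus_def by simp

lemma monotone_op_plus:
  assumes F: "monotone_op (\<lambda>z. {F z})" and H: "monotone_op H"
  shows "monotone_op (op_plus F H)"
  unfolding monotone_op_def op_plus_def
proof (clarify)
  fix x y h h' assume "h \<in> H x" "h' \<in> H y"
  then have "0 \<le> inner (x - y) (h - h')"
    using H unfolding monotone_op_def by blast
  moreover have "0 \<le> inner (x - y) (F x - F y)"
    using F unfolding monotone_op_def by blast
  ultimately show "0 \<le> inner (x - y) (F x + h - (F y + h'))"
    by (simp add: inner_diff_right inner_add_right)
qed

lemma op_plus_replace_single_valued:
  "u \<in> op_plus G H y \<Longrightarrow> F y + u - G y \<in> op_plus F H y"
  unfolding op_plus_def by auto

lemma monotone_op_imp_eps_enlargement_0:
  "monotone_op A \<Longrightarrow> v \<in> A y \<Longrightarrow> v \<in> eps_enlargement A 0 y"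
  unfolding monotone_op_def eps_enlargement_def by auto

lemma taylor_step_error_le:
  fixes F :: "'a::euclidean_space \<Rightarrow> 'a"
  assumes FD: "lipschitz_higher_deriv F p L DF" and p: "1 \<le> p" and L: "0 < L"
    and H: "maximal_monotone H" and proj: "is_projection (op_dom H) x x'"
    and u: "u \<in> op_plus (taylor_approx DF p x') H y"
    and err: "norm (lam *\<^sub>R u + y - x) \<le> \<sigma>hat * norm (y - x)"
    and lam: "0 < lam" and step: "lam * norm (y - x) ^ (p - 1) \<le> \<sigma>u * fact p / L"
  shows "norm (lam *\<^sub>R (F y + u - taylor_approx DF p x' y) + y - x) \<le> (\<sigma>hat + \<sigma>u) * norm (y - x)"
proof -
  define N where "N = norm (y - x)"
  define T where "T = taylor_approx DF p x'"
  have "y \<in> op_dom H"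
    using u unfolding op_plus_def op_dom_def by blast
  then have "norm (y - x') \<le> N"
    using dist_projection_op_dom_le[OF H proj] by (simp add: N_def dist_norm)
  have "norm (F y - T y) \<le> L / fact p * norm (y - x') ^ p"
    using taylor_approx_error[OF FD p] L unfolding T_def by simp
  also have "\<dots> \<le> L / fact p * N ^ p"
    using \<open>norm (y - x') \<le> N\<close> L by (intro mult_left_mono power_mono) auto
  also have "\<dots> = L / fact p * N ^ (p - 1) * N"
    using p by (simp add: power_eq_if)
  finally have "lam * norm (F y - T y) \<le> lam * (L / fact p * N ^ (p - 1) * N)"
    using lam by (intro mult_left_mono) auto
  also have "\<dots> = L / fact p * (lam * N ^ (p - 1)) * N"
    by (simp add: mult_ac)
  also have "\<dots> \<le> L / fact p * (\<sigma>u * fact p / L) * N"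
    using step L unfolding N_def by (intro mult_right_mono mult_left_mono) auto
  also have "\<dots> = \<sigma>u * N"
    using L by simp
  finally have "norm (lam *\<^sub>R (F y - T y)) \<le> \<sigma>u * N"
    using lam by simp
  moreover have "lam *\<^sub>R (F y + u - T y) + y - x = (lam *\<^sub>R u + y - x) + lam *\<^sub>R (F y - T y)"
    by (simp add: algebra_simps)
  ultimately show ?thesis
    using err norm_triangle_ineq[of "lam *\<^sub>R u + y - x" "lam *\<^sub>R (F y - T y)"]
    unfolding N_def T_def by (simp add: algebra_simps)
qed

theorem proposition4p1:
  fixes F :: "'a::euclidean_space \<Rightarrow> 'a"
    and H :: "'a \<Rightarrow> 'a set"
    and DF :: "nat \<Rightarrow> 'a \<Rightarrow> 'a list \<Rightarrow> 'a"
    and p :: nat and L \<sigma>hat \<sigma>l \<sigma>u :: real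
    and x x' y u v :: "nat \<Rightarrow> 'a" and lam :: "nat \<Rightarrow> real"
  assumes F_mon: "maximal_monotone (\<lambda>z. {F z})"
    and F_deriv: "lipschitz_higher_deriv F p L DF"
    and p: "p \<ge> 1" and L: "L > 0"
    and H_mon: "maximal_monotone H"
    and \<sigma>hat: "0 < \<sigma>hat" "\<sigma>hat < 1"
    and \<sigma>lu: "0 < \<sigma>l" "\<sigma>l < \<sigma>u" "\<sigma>u < 1"
    and \<sigma>: "\<sigma>hat + \<sigma>u < 1"
    and proj: "\<And>k. is_projection (op_dom (op_plus F H)) (x k) (x' k)"
    and lam_pos: "\<And>k. lam (Suc k) > 0"
    and u_in: "\<And>k. u (Suc k) \<in> op_plus (taylor_approx DF p (x' k)) H (y (Suc k))"
    and err: "\<And>k. norm (lam (Suc k) *\<^sub>R u (Suc k) + y (Suc k) - x k)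
                     \<le> \<sigma>hat * norm (y (Suc k) - x k)"
    and step_lo: "\<And>k. \<sigma>l * fact p / L \<le> lam (Suc k) * norm (y (Suc k) - x k) ^ (p - 1)"
    and step_hi: "\<And>k. lam (Suc k) * norm (y (Suc k) - x k) ^ (p - 1) \<le> \<sigma>u * fact p / L"
    and v_def: "\<And>k. v (Suc k) = F (y (Suc k)) + u (Suc k)
                                   - taylor_approx DF p (x' k) (y (Suc k))"
    and x_def: "\<And>k. x (Suc k) = x k - lam (Suc k) *\<^sub>R v (Suc k)"
  shows "let \<theta> = \<sigma>l * fact p / L; \<epsilon> = (\<lambda>k::nat. 0::real); \<sigma>' = \<sigma>hat + \<sigma>u in
         \<forall>k. v (Suc k) \<in> eps_enlargement (op_plus F H) (\<epsilon> (Suc k)) (y (Suc k))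
           \<and> v (Suc k) \<in> op_plus F H (y (Suc k))
           \<and> norm (lam (Suc k) *\<^sub>R v (Suc k) + y (Suc k) - x k) ^ 2
               + 2 * lam (Suc k) * \<epsilon> (Suc k)
               \<le> \<sigma>' ^ 2 * norm (y (Suc k) - x k) ^ 2
           \<and> lam (Suc k) * norm (y (Suc k) - x k) ^ (p - 1) \<ge> \<theta>"
  unfolding Let_def
proof (intro allI conjI)
  fix k
  show v_in: "v (Suc k) \<in> op_plus F H (y (Suc k))"
    unfolding v_def by (rule op_plus_replace_single_valued[OF u_in])
  have "monotone_op (op_plus F H)"
    using F_mon H_mon by (intro monotone_op_plus maximal_monotone_imp_monotone_op)
  then show "v (Suc k) \<in> eps_enlargement (op_plus F H) 0 (y (Suc k))"
    using v_in by (rule monotone_op_imp_eps_enlargement_0)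
  have "norm (lam (Suc k) *\<^sub>R v (Suc k) + y (Suc k) - x k) \<le> (\<sigma>hat + \<sigma>u) * norm (y (Suc k) - x k)"
    unfolding v_def using proj[of k] lam_pos u_in err step_hi
    by (intro taylor_step_error_le[OF F_deriv p L H_mon]) (simp_all add: op_dom_op_plus)
  then show "norm (lam (Suc k) *\<^sub>R v (Suc k) + y (Suc k) - x k) ^ 2 + 2 * lam (Suc k) * 0
      \<le> (\<sigma>hat + \<sigma>u) ^ 2 * norm (y (Suc k) - x k) ^ 2"
    by (simp add: power_mono flip: power_mult_distrib)
  show "\<sigma>l * fact p / L \<le> lam (Suc k) * norm (y (Suc k) - x k) ^ (p - 1)"
    by (rule step_lo)
qed

end
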